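(* Let $G$ be a factor-critical graph with at least $7$ vertices. If $G$ is an edge-stable equimatchable graph which is not a complete graph on an odd number of vertices, then there is an independent set $S$ with $|S|\ge 2$ such that every vertex of $S$ is adjacent to every vertex of $V(G)\setminus S$.
   Context: All graphs are finite and simple. A graph is equimatchable if all its maximal matchings have the same cardinality; an equimatchable graph $G$ is edge-stable if $G\setminus e$ (delete edge $e$, keep vertices) is equimatchable for every $e\in E(G)$. A graph $G$ is factor-critical if $G-v$ has a perfect matching for every $v\in V(G)$. *)

theory Defs
  imports Main
begin

definition graph :: "'a set \<Rightarrow> 'a set set \<Rightarrow> bool" where
  "graph V E \<longleftrightarrow> finite V \<and> (\<forall>e\<in>E. e \<subseteq> V \<and> card e = 2)"

definition adj :: "'a set set \<Rightarrow> 'a \<Rightarrow> 'a \<Rightarrow> bool" where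
  "adj E u v \<longleftrightarrow> {u, v} \<in> E"

definition matching :: "'a set set \<Rightarrow> 'a set set \<Rightarrow> bool" where
  "matching E M \<longleftrightarrow> M \<subseteq> E \<and> (\<forall>e1\<in>M. \<forall>e2\<in>M. e1 \<noteq> e2 \<longrightarrow> e1 \<inter> e2 = {})"

definition maximal_matching :: "'a set set \<Rightarrow> 'a set set \<Rightarrow> bool" where
  "maximal_matching E M \<longleftrightarrow> matching E M \<and> (\<forall>M'. matching E M' \<and> M \<subseteq> M' \<longrightarrow> M' = M)"

definition equimatchable :: "'a set set \<Rightarrow> bool" where
  "equimatchable E \<longleftrightarrow>
     (\<forall>M1 M2. maximal_matching E M1 \<and> maximal_matching E M2 \<longrightarrow> card M1 = card M2)"

definition edge_stable :: "'a set set \<Rightarrow> bool" where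
  "edge_stable E \<longleftrightarrow> equimatchable E \<and> (\<forall>e\<in>E. equimatchable (E - {e}))"

definition perfect_matching :: "'a set \<Rightarrow> 'a set set \<Rightarrow> 'a set set \<Rightarrow> bool" where
  "perfect_matching V E M \<longleftrightarrow> matching E M \<and> \<Union>M = V"

definition factor_critical :: "'a set \<Rightarrow> 'a set set \<Rightarrow> bool" where
  "factor_critical V E \<longleftrightarrow>
     (\<forall>v\<in>V. \<exists>M. perfect_matching (V - {v}) {e\<in>E. v \<notin> e} M)"

definition complete_graph :: "'a set \<Rightarrow> 'a set set \<Rightarrow> bool" where
  "complete_graph V E \<longleftrightarrow> E = {e. e \<subseteq> V \<and> card e = 2}"

definition independent_set :: "'a set \<Rightarrow> 'a set set \<Rightarrow> 'a set \<Rightarrow> bool" where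
  "independent_set V E S \<longleftrightarrow> S \<subseteq> V \<and> (\<forall>u\<in>S. \<forall>v\<in>S. \<not> adj E u v)"

end

theory Submission
  imports Defs
begin

text \<open>
  Call \<open>p, q, r\<close> an anticherry if \<open>p\<close> is adjacent to neither \<open>q\<close> nor \<open>r\<close>. In an
  edge-stable factor-critical graph \<open>G - {p, q, r}\<close> has no perfect matching for an
  anticherry: after deleting the edge \<open>qr\<close>, such a matching would be a maximal matching
  smaller than any maximal extension of a near-perfect matching missing \<open>q\<close>.

  Let \<open>b\<close> have the largest number \<open>D\<close> of non-neighbours and let \<open>A\<close> be its set of
  non-neighbours. If \<open>A\<close> is independent, \<open>A \<union> {b}\<close> is the required set, since a missing
  edge between it and the rest would produce a vertex with more than \<open>D\<close> non-neighbours.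
  Otherwise take a perfect matching \<open>M\<close> of \<open>G - b\<close>. Trading a few edges of \<open>M\<close> for
  others so that exactly an anticherry stays uncovered is impossible; combined with the
  maximality of \<open>D\<close> and a count of vertices (which needs \<open>|V| \<ge> 7\<close>), this shows that the
  \<open>M\<close>-partners of \<open>A\<close> form an independent set of size \<open>D\<close> joined to all other vertices.
\<close>

section \<open>Matchings\<close>

lemma adj_commute: "adj E u v \<longleftrightarrow> adj E v u"
  by (simp add: adj_def insert_commute)

lemma matching_edge_unique:
  "matching E M \<Longrightarrow> e1 \<in> M \<Longrightarrow> e2 \<in> M \<Longrightarrow> x \<in> e1 \<Longrightarrow> x \<in> e2 \<Longrightarrow> e1 = e2"
  unfolding matching_def by blast

lemma matching_singleton: "adj E p q \<Longrightarrow> matching E {{p, q}}"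
  unfolding matching_def adj_def by simp

lemma matching_two_edges:
  "adj E p q \<Longrightarrow> adj E r s \<Longrightarrow> distinct [p, q, r, s] \<Longrightarrow> matching E {{p, q}, {r, s}}"
  unfolding matching_def adj_def by (simp add: doubleton_eq_iff) blast

lemma matching_three_edges:
  "adj E p q \<Longrightarrow> adj E r s \<Longrightarrow> adj E t u \<Longrightarrow> distinct [p, q, r, s, t, u] \<Longrightarrow>
   matching E {{p, q}, {r, s}, {t, u}}"
  unfolding matching_def adj_def by (simp add: doubleton_eq_iff) blast

lemma card_Union_matching:
  assumes "matching E M" "\<forall>e\<in>E. card e = 2" "finite (\<Union>M)"
  shows "card (\<Union>M) = 2 * card M"
proof -
  have edge_card: "card e = 2" if "e \<in> M" for e
    using that assms(1,2) unfolding matching_def by blast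
  have "M \<subseteq> Pow (\<Union>M)"
    by blast
  then have "finite M"
    using assms(3) by (simp add: finite_subset)
  moreover have "finite e" if "e \<in> M" for e
    using edge_card[OF that] by (metis card.infinite zero_neq_numeral)
  moreover have "pairwise disjnt M"
    using assms(1) unfolding matching_def pairwise_def disjnt_def by blast
  ultimately have "card (\<Union>M) = sum card M"
    by (intro card_Union_disjoint) auto
  also have "\<dots> = 2 * card M"
    using edge_card by simp
  finally show ?thesis .
qed

lemma matching_extends_to_maximal:
  assumes "finite E" "matching E M0"
  obtains M where "maximal_matching E M" "M0 \<subseteq> M"
proof -
  let ?A = "{M. matching E M \<and> M0 \<subseteq> M}"
  have "?A \<subseteq> Pow E"
    unfolding matching_def by blast
  then have "finite ?A"
    using assms(1) by (simp add: finite_subset)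
  moreover have "M0 \<in> ?A"
    using assms(2) by blast
  ultimately obtain M where M: "M \<in> ?A" "\<forall>M'\<in>?A. M \<le> M' \<longrightarrow> M = M'"
    using finite_has_maximal[of ?A] by blast
  have "maximal_matching E M"
    unfolding maximal_matching_def
  proof (intro conjI allI impI)
    show "matching E M"
      using M(1) by simp
    fix M' assume "matching E M' \<and> M \<subseteq> M'"
    then have "M' \<in> ?A"
      using M(1) by blast
    then show "M' = M"
      using M(2) \<open>matching E M' \<and> M \<subseteq> M'\<close> by blast
  qed
  then show thesis
    using M(1) that by blast
qed

lemma matching_exchange:
  assumes M: "matching E M" and R: "R \<subseteq> M" and N: "matching E N"
    and N_vertices: "\<Union>N \<subseteq> \<Union>R \<union> - \<Union>M"
  shows "matching E ((M - R) \<union> N)" "\<Union>((M - R) \<union> N) = (\<Union>M - \<Union>R) \<union> \<Union>N"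
proof -
  have kept: "\<Union>(M - R) = \<Union>M - \<Union>R"
  proof
    show "\<Union>(M - R) \<subseteq> \<Union>M - \<Union>R"
    proof
      fix x assume "x \<in> \<Union>(M - R)"
      then obtain e where e: "e \<in> M" "e \<notin> R" "x \<in> e"
        by blast
      have "x \<notin> f" if "f \<in> R" for f
        using matching_edge_unique[OF M e(1) _ e(3)] that e(2) R by blast
      then show "x \<in> \<Union>M - \<Union>R"
        using e by blast
    qed
  qed blast
  have cross: "e \<inter> f = {}" "f \<inter> e = {}" if "e \<in> M - R" "f \<in> N" for e f
  proof -
    have "e \<subseteq> \<Union>M - \<Union>R" "f \<subseteq> \<Union>R \<union> - \<Union>M"
      using that kept N_vertices by blast+
    then show "e \<inter> f = {}" "f \<inter> e = {}"
      by blast+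
  qed
  show "matching E ((M - R) \<union> N)"
    unfolding matching_def
  proof (intro conjI ballI impI)
    show "M - R \<union> N \<subseteq> E"
      using M N by (auto simp: matching_def)
    fix e1 e2 assume e: "e1 \<in> M - R \<union> N" "e2 \<in> M - R \<union> N" "e1 \<noteq> e2"
    show "e1 \<inter> e2 = {}"
    proof (cases "e1 \<in> N"; cases "e2 \<in> N")
      assume "e1 \<in> N" "e2 \<in> N"
      then show ?thesis
        using N e(3) unfolding matching_def by blast
    next
      assume "e1 \<notin> N" "e2 \<notin> N"
      then show ?thesis
        using M e unfolding matching_def by blast
    qed (use cross e in blast)+
  qed
  show "\<Union>((M - R) \<union> N) = (\<Union>M - \<Union>R) \<union> \<Union>N"
    using kept by blast
qed

text \<open>Only meaningful for vertices covered by \<open>M\<close>.\<close>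

definition mate :: "'a set set \<Rightarrow> 'a \<Rightarrow> 'a" where
  "mate M v = (THE w. {v, w} \<in> M)"

lemma mate_eqI:
  assumes "matching E M" "{v, w} \<in> M"
  shows "mate M v = w"
  unfolding mate_def
proof (rule the_equality)
  fix w' assume "{v, w'} \<in> M"
  then have "{v, w'} = {v, w}"
    using matching_edge_unique[OF assms(1)] assms(2) by blast
  then show "w' = w"
    by (auto simp: doubleton_eq_iff)
qed fact

lemma mate_edge:
  assumes "matching E M" "\<forall>e\<in>E. card e = 2" "v \<in> \<Union>M"
  shows "{v, mate M v} \<in> M" "mate M v \<noteq> v"
proof -
  obtain e where e: "e \<in> M" "v \<in> e"
    using assms(3) by blast
  then have "card e = 2"
    using assms(1,2) unfolding matching_def by blast
  then obtain w where w: "e = {v, w}" "w \<noteq> v"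
    using e(2) by (auto simp: card_2_iff doubleton_eq_iff)
  then have "mate M v = w"
    using mate_eqI[OF assms(1)] e(1) by blast
  then show "{v, mate M v} \<in> M" "mate M v \<noteq> v"
    using w e by auto
qed

section \<open>Factor-critical graphs\<close>

definition anticherry :: "'a set set \<Rightarrow> 'a \<Rightarrow> 'a \<Rightarrow> 'a \<Rightarrow> bool" where
  "anticherry E p q r \<longleftrightarrow> distinct [p, q, r] \<and> \<not> adj E p q \<and> \<not> adj E p r"

locale fc_graph =
  fixes V :: "'a set" and E :: "'a set set"
  assumes graph: "graph V E" and factor_critical: "factor_critical V E"
begin

lemma finite_V: "finite V"
  using graph by (simp add: graph_def)

lemma edge_card: "\<forall>e\<in>E. card e = 2"
  using graph by (simp add: graph_def)

lemma finite_E: "finite E"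
proof -
  have "E \<subseteq> Pow V"
    using graph by (auto simp: graph_def)
  then show ?thesis
    using finite_V by (simp add: finite_subset)
qed

lemma not_adj_self: "\<not> adj E u u"
  using edge_card unfolding adj_def by fastforce

lemma card_Union_matching_in_V: "matching E M \<Longrightarrow> card (\<Union>M) = 2 * card M"
proof -
  assume M: "matching E M"
  then have "\<Union>M \<subseteq> V"
    using graph unfolding matching_def graph_def by blast
  then show ?thesis
    using card_Union_matching[OF M edge_card] finite_V finite_subset by blast
qed

lemma near_perfect_matching:
  assumes "v \<in> V"
  obtains M where "matching E M" "\<Union>M = V - {v}"
proof -
  obtain M where "perfect_matching (V - {v}) {e\<in>E. v \<notin> e} M"
    using assms factor_critical unfolding factor_critical_def by blast
  then have "matching E M" "\<Union>M = V - {v}"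
    unfolding perfect_matching_def matching_def by blast+
  then show thesis
    by (rule that)
qed

lemma odd_card_V:
  assumes "V \<noteq> {}"
  shows "odd (card V)"
proof -
  obtain v where v: "v \<in> V"
    using assms by blast
  then obtain M where M: "matching E M" "\<Union>M = V - {v}"
    by (rule near_perfect_matching)
  have "card V - 1 = 2 * card M"
    using card_Union_matching_in_V[OF M(1)] M(2) v finite_V by simp
  moreover have "card V \<ge> 1"
    using v finite_V card_0_eq by fastforce
  ultimately show ?thesis
    by presburger
qed

lemma complete_graph_if_adj:
  assumes "\<forall>u\<in>V. \<forall>v\<in>V. u \<noteq> v \<longrightarrow> adj E u v"
  shows "complete_graph V E"
  unfolding complete_graph_def
proof
  show "E \<subseteq> {e. e \<subseteq> V \<and> card e = 2}"
    using graph by (auto simp: graph_def)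
  show "{e. e \<subseteq> V \<and> card e = 2} \<subseteq> E"
  proof
    fix e assume "e \<in> {e. e \<subseteq> V \<and> card e = 2}"
    then obtain x y where "e = {x, y}" "x \<noteq> y" "x \<in> V" "y \<in> V"
      by (auto simp: card_2_iff)
    then show "e \<in> E"
      using assms unfolding adj_def by blast
  qed
qed

lemma edge_stable_anticherry_unmatchable:
  assumes stable: "edge_stable E"
    and pqr: "p \<in> V" "q \<in> V" "r \<in> V" "anticherry E p q r"
    and N: "matching E N"
  shows "\<Union>N \<noteq> V - {p, q, r}"
proof
  assume N_cover: "\<Union>N = V - {p, q, r}"
  have distinct: "distinct [p, q, r]" and non_adj: "\<not> adj E p q" "\<not> adj E p r"
    using pqr(4) by (auto simp: anticherry_def)
  define E' where "E' = E - {{q, r}}"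
  have "equimatchable E'"
  proof (cases "{q, r} \<in> E")
    case False
    then show ?thesis
      using stable unfolding edge_stable_def E'_def by simp
  qed (use stable in \<open>auto simp: edge_stable_def E'_def\<close>)
  have finite_E': "finite E'" and edge_card': "\<forall>e\<in>E'. card e = 2"
    using finite_E edge_card by (auto simp: E'_def)
  have N': "matching E' N"
    using N N_cover distinct unfolding matching_def E'_def by auto
  have "maximal_matching E' N"
    unfolding maximal_matching_def
  proof (intro conjI allI impI N')
    fix N' assume N'_ext: "matching E' N' \<and> N \<subseteq> N'"
    show "N' = N"
    proof (rule ccontr)
      assume "N' \<noteq> N"
      then obtain e where e: "e \<in> N'" "e \<notin> N"
        using N'_ext by blast
      have "e \<inter> \<Union>N = {}"
        using matching_edge_unique[of E' N' e] N'_ext e by blast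
      moreover have eE: "e \<in> E" "e \<noteq> {q, r}" "e \<subseteq> V"
        using e N'_ext graph unfolding matching_def E'_def graph_def by auto
      ultimately have "e \<subseteq> {p, q, r}"
        using N_cover by blast
      moreover obtain x y where "e = {x, y}" "x \<noteq> y"
        using edge_card eE(1) by (meson card_2_iff)
      ultimately show False
        using eE non_adj distinct unfolding adj_def by (auto simp: insert_commute)
    qed
  qed
  obtain Mq where Mq: "matching E Mq" "\<Union>Mq = V - {q}"
    using pqr(2) by (rule near_perfect_matching)
  then have "matching E' Mq"
    unfolding matching_def E'_def by auto
  then obtain Mx where Mx: "maximal_matching E' Mx" "Mq \<subseteq> Mx"
    using matching_extends_to_maximal[OF finite_E'] by blast
  have "card Mx = card N"
    using \<open>equimatchable E'\<close> Mx(1) \<open>maximal_matching E' N\<close> unfolding equimatchable_def by blast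
  moreover have "card Mq \<le> card Mx"
    using Mx finite_E' unfolding maximal_matching_def matching_def
    by (meson card_mono finite_subset)
  moreover have "card {p, q, r} = 3"
    using distinct by simp
  then have "card (V - {p, q, r}) + 3 = card V"
    using pqr(1-3) finite_V
    by (metis card_Diff_subset card_mono empty_subsetI finite_subset insert_subset
        le_add_diff_inverse2 add.commute)
  moreover have "card (V - {q}) + 1 = card V"
    using pqr(2) finite_V by (metis card_Suc_Diff1 Suc_eq_plus1)
  ultimately show False
    using card_Union_matching_in_V[OF Mq(1)] card_Union_matching_in_V[OF N] Mq(2) N_cover by simp
qed

end

section \<open>Non-neighbourhoods\<close>

definition joined_independent_set :: "'a set \<Rightarrow> 'a set set \<Rightarrow> 'a set \<Rightarrow> bool" where
  "joined_independent_set V E S \<longleftrightarrow>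
     independent_set V E S \<and> 2 \<le> card S \<and> (\<forall>u\<in>S. \<forall>v\<in>V - S. adj E u v)"

locale anticherry_unmatchable = fc_graph +
  assumes no_perfect_matching_off_anticherry:
    "p \<in> V \<Longrightarrow> q \<in> V \<Longrightarrow> r \<in> V \<Longrightarrow> anticherry E p q r \<Longrightarrow> matching E N \<Longrightarrow>
     \<Union>N \<noteq> V - {p, q, r}"
begin

definition non_nbrs :: "'a \<Rightarrow> 'a set" where
  "non_nbrs u = {w\<in>V. w \<noteq> u \<and> \<not> adj E u w}"

lemma mem_non_nbrs [simp]: "w \<in> non_nbrs u \<longleftrightarrow> w \<in> V \<and> w \<noteq> u \<and> \<not> adj E u w"
  by (simp add: non_nbrs_def)

lemma anticherry_non_nbrs:
  "q \<in> non_nbrs p \<Longrightarrow> r \<in> non_nbrs p \<Longrightarrow> q \<noteq> r \<Longrightarrow> anticherry E p q r"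
  by (auto simp: anticherry_def)

lemma non_nbrs_sym: "u \<in> V \<Longrightarrow> v \<in> non_nbrs u \<Longrightarrow> u \<in> non_nbrs v"
  using adj_commute[of E u v] by auto

lemma finite_non_nbrs: "finite (non_nbrs u)"
  using finite_V by (simp add: non_nbrs_def)

lemma independent_set_joined_if_antidegree_less:
  assumes S: "independent_set V E S" "finite S"
    and antidegree: "\<And>v. v \<in> V \<Longrightarrow> card (non_nbrs v) < card S"
    and u: "u \<in> S" and v: "v \<in> V - S"
  shows "adj E u v"
proof (rule ccontr)
  assume "\<not> adj E u v"
  then have "insert v (S - {u}) \<subseteq> non_nbrs u"
    using S(1) u v by (auto simp: independent_set_def)
  then have "card (insert v (S - {u})) \<le> card (non_nbrs u)"
    by (simp add: card_mono finite_non_nbrs)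
  moreover have "card (insert v (S - {u})) = card S"
    using S(2) u v card_gt_0_iff[of S] by auto
  moreover have "u \<in> V"
    using S(1) u by (auto simp: independent_set_def)
  ultimately show False
    using antidegree[OF \<open>u \<in> V\<close>] by linarith
qed

lemma joined_independent_set_if_non_nbrs_independent:
  assumes b: "b \<in> V" and antidegree_max: "\<And>v. v \<in> V \<Longrightarrow> card (non_nbrs v) \<le> card (non_nbrs b)"
    and nonempty: "non_nbrs b \<noteq> {}"
    and independent: "\<forall>a1\<in>non_nbrs b. \<forall>a2\<in>non_nbrs b. \<not> adj E a1 a2"
  shows "joined_independent_set V E (insert b (non_nbrs b))"
proof -
  let ?S = "insert b (non_nbrs b)"
  have independent_S: "independent_set V E ?S"
    using b independent not_adj_self adj_commute[of E b] unfolding independent_set_def by auto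
  have card_S: "card ?S = card (non_nbrs b) + 1"
    by (simp add: finite_non_nbrs)
  have "card (non_nbrs b) \<ge> 1"
    using nonempty finite_non_nbrs by (simp add: Suc_leI card_gt_0_iff)
  moreover have "\<forall>u\<in>?S. \<forall>v\<in>V - ?S. adj E u v"
  proof (intro ballI)
    fix u v assume uv: "u \<in> ?S" "v \<in> V - ?S"
    have antidegree_less: "card (non_nbrs w) < card ?S" if "w \<in> V" for w
      using antidegree_max[OF that] card_S by linarith
    show "adj E u v"
      using finite_non_nbrs
      by (intro independent_set_joined_if_antidegree_less[OF independent_S _ antidegree_less uv])
        simp_all
  qed
  ultimately show ?thesis
    using independent_S card_S unfolding joined_independent_set_def by presburger
qed

end

section \<open>A vertex of maximum antidegree\<close>

locale max_antidegree = anticherry_unmatchable +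
  fixes b :: 'a and M :: "'a set set"
  assumes b_in_V: "b \<in> V"
    and antidegree_max: "v \<in> V \<Longrightarrow> card (non_nbrs v) \<le> card (non_nbrs b)"
    and M_matching: "matching E M" and M_cover: "\<Union>M = V - {b}"
begin

lemma
  assumes "y \<in> V" "y \<noteq> b"
  shows mate_in_M: "{y, mate M y} \<in> M"
    and mate_neq [simp]: "mate M y \<noteq> y" "y \<noteq> mate M y"
    and mate_in_V [simp]: "mate M y \<in> V"
    and mate_neq_b: "mate M y \<noteq> b"
    and mate_mate [simp]: "mate M (mate M y) = y"
    and adj_mate: "adj E y (mate M y)"
proof -
  have y: "y \<in> \<Union>M"
    using assms M_cover by blast
  show edge: "{y, mate M y} \<in> M" and "mate M y \<noteq> y" "y \<noteq> mate M y"
    using mate_edge[OF M_matching edge_card y] by auto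
  then show "mate M y \<in> V" "mate M y \<noteq> b"
    using M_cover by blast+
  show "mate M (mate M y) = y"
    using mate_eqI[OF M_matching] edge by (metis insert_commute)
  show "adj E y (mate M y)"
    using edge M_matching unfolding matching_def adj_def by blast
qed

lemma exchange_not_missing_anticherry:
  assumes R: "R \<subseteq> M" and N: "matching E N" "\<Union>N \<subseteq> \<Union>R \<union> {b}"
    and pqr: "p \<in> V" "q \<in> V" "r \<in> V" "anticherry E p q r"
  shows "(V - {b} - \<Union>R) \<union> \<Union>N \<noteq> V - {p, q, r}"
proof -
  have "\<Union>N \<subseteq> \<Union>R \<union> - \<Union>M"
    using N(2) M_cover by blast
  note exchanged = matching_exchange[OF M_matching R N(1) this]
  show ?thesis
    using no_perfect_matching_off_anticherry[OF pqr exchanged(1)] exchanged(2) M_cover by simp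
qed

lemma mate_notin_non_nbrs:
  assumes a: "a \<in> non_nbrs b"
  shows "mate M a \<notin> non_nbrs b"
proof
  assume ma: "mate M a \<in> non_nbrs b"
  have "a \<noteq> mate M a"
    using a by simp
  then have "anticherry E b a (mate M a)"
    by (rule anticherry_non_nbrs[OF a ma])
  moreover have "{{a, mate M a}} \<subseteq> M"
    using a mate_in_M by simp
  ultimately show False
    using exchange_not_missing_anticherry[of "{{a, mate M a}}" "{}" b a "mate M a"] a b_in_V
    by (auto simp: matching_def)
qed

lemma mates_not_adj:
  assumes a: "a \<in> non_nbrs b" "a' \<in> non_nbrs b" "a \<noteq> a'"
  shows "\<not> adj E (mate M a) (mate M a')"
proof
  assume adj: "adj E (mate M a) (mate M a')"
  have "mate M a \<noteq> b" "mate M a' \<noteq> b"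
    using a mate_neq_b by simp_all
  moreover have "anticherry E b a a'"
    using anticherry_non_nbrs a by blast
  moreover have "{{a, mate M a}, {a', mate M a'}} \<subseteq> M"
    using a mate_in_M by simp
  moreover have "mate M a \<noteq> a'" "mate M a' \<noteq> a"
    using a mate_notin_non_nbrs by blast+
  ultimately show False
    using exchange_not_missing_anticherry[of "{{a, mate M a}, {a', mate M a'}}"
        "{{mate M a, mate M a'}}" b a a']
      matching_singleton[OF adj] a b_in_V
    by auto
qed

lemma mate_eq_iff [simp]:
  "y \<in> V \<Longrightarrow> y \<noteq> b \<Longrightarrow> z \<in> V \<Longrightarrow> z \<noteq> b \<Longrightarrow> mate M y = mate M z \<longleftrightarrow> y = z"
  by (metis mate_mate)

abbreviation mates :: "'a set" where
  "mates \<equiv> mate M ` non_nbrs b"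

lemma mate_in_mates_iff [simp]:
  "y \<in> V \<Longrightarrow> y \<noteq> b \<Longrightarrow> mate M y \<in> mates \<longleftrightarrow> y \<in> non_nbrs b"
  by auto

lemma mate_in_non_nbrs_iff:
  assumes "y \<in> V" "y \<noteq> b"
  shows "mate M y \<in> non_nbrs b \<longleftrightarrow> y \<in> mates"
  using assms mate_notin_non_nbrs
  by (metis image_eqI mate_in_mates_iff mate_in_V mate_mate mate_neq_b)

lemma mates_subset: "mates \<subseteq> V - {b} - non_nbrs b"
proof
  fix x assume "x \<in> mates"
  then obtain a where a: "a \<in> non_nbrs b" "x = mate M a"
    by blast
  then show "x \<in> V - {b} - non_nbrs b"
    using mate_notin_non_nbrs[OF a(1)] mate_neq_b[of a] by simp
qed

lemma card_mates: "card mates = card (non_nbrs b)"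
  by (rule card_image) (auto intro: inj_onI)

lemma independent_mates: "independent_set V E mates"
  using mates_subset mates_not_adj not_adj_self unfolding independent_set_def by blast

lemma card_V_ge_twice_antidegree: "2 * card (non_nbrs b) + 1 \<le> card V"
proof -
  have "insert b (non_nbrs b \<union> mates) \<subseteq> V"
    using mates_subset b_in_V by auto
  moreover have "non_nbrs b \<inter> mates = {}" "b \<notin> non_nbrs b \<union> mates"
    using mates_subset by auto
  then have "card (insert b (non_nbrs b \<union> mates)) = 2 * card (non_nbrs b) + 1"
    using card_mates finite_non_nbrs by (simp add: card_Un_disjoint)
  ultimately show ?thesis
    using finite_V card_mono by metis
qed

lemma non_adj_if_mate_non_adj:
  assumes k: "k \<in> non_nbrs b" and j: "j \<in> non_nbrs b" "j \<noteq> k"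
    and non_adj: "\<not> adj E (mate M k) j"
    and y: "y \<in> V - mates" "y \<notin> {b, j, k}"
  shows "\<not> adj E k y"
proof
  assume ky: "adj E k y"
  have y': "mate M y \<notin> non_nbrs b" "mate M y \<noteq> b"
    using y mate_in_non_nbrs_iff[of y] mate_neq_b[of y] by auto
  have mates_ne_b: "mate M k \<noteq> b" "mate M j \<noteq> b"
    using k j mate_neq_b by simp_all
  have "anticherry E (mate M k) j (mate M j)"
    using k j non_adj mates_not_adj[OF k j(1)] mate_notin_non_nbrs[OF k]
    by (auto simp: anticherry_def)
  moreover have "{{j, mate M j}, {k, mate M k}, {y, mate M y}} \<subseteq> M"
    using k j y mate_in_M by simp
  moreover have "matching E {{k, y}, {b, mate M y}}"
    using y y' k by (intro matching_two_edges[OF ky]) auto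
  ultimately show False
    using exchange_not_missing_anticherry[of "{{j, mate M j}, {k, mate M k}, {y, mate M y}}"
        "{{k, y}, {b, mate M y}}"
        "mate M k" j "mate M j"]
      k j y y' mates_ne_b mate_notin_non_nbrs[OF k] mate_notin_non_nbrs[OF j(1)] b_in_V
    by auto
qed

lemma mate_non_adj_swap:
  assumes k: "k \<in> non_nbrs b" and j: "j \<in> non_nbrs b" "j \<noteq> k"
    and non_adj: "\<not> adj E (mate M k) j"
  shows "\<not> adj E (mate M j) k"
proof
  assume jk: "adj E (mate M j) k"
  have mates_ne_b: "mate M k \<noteq> b" "mate M j \<noteq> b"
    using k j mate_neq_b by simp_all
  have "mate M k \<in> non_nbrs j"
    using non_nbrs_sym[of "mate M k" j] mate_notin_non_nbrs[OF k] k j non_adj by auto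
  then have "anticherry E j b (mate M k)"
    using anticherry_non_nbrs[of b j "mate M k"] non_nbrs_sym[OF b_in_V j(1)] mates_ne_b by blast
  moreover have "{{j, mate M j}, {k, mate M k}} \<subseteq> M"
    using k j mate_in_M by simp
  ultimately show False
    using exchange_not_missing_anticherry[of "{{j, mate M j}, {k, mate M k}}"
        "{{mate M j, k}}" j b "mate M k"]
      matching_singleton[OF jk] k j mates_ne_b
      mate_notin_non_nbrs[OF k] mate_notin_non_nbrs[OF j(1)] b_in_V
    by auto
qed

lemma mate_non_adj_if_adj_mate:
  assumes k: "k \<in> non_nbrs b" and j: "j \<in> non_nbrs b" "j \<noteq> k"
    and l: "l \<in> non_nbrs b" "l \<noteq> j" "l \<noteq> k"
    and non_adj: "\<not> adj E (mate M k) j" and kl: "adj E k (mate M l)"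
  shows "\<not> adj E (mate M j) l"
proof
  assume jl: "adj E (mate M j) l"
  have mates_ne_b: "mate M k \<noteq> b" "mate M j \<noteq> b" "mate M l \<noteq> b"
    using k j l mate_neq_b by simp_all
  have "mate M k \<in> non_nbrs j"
    using non_nbrs_sym[of "mate M k" j] mate_notin_non_nbrs[OF k] k j non_adj by auto
  then have "anticherry E j b (mate M k)"
    using anticherry_non_nbrs[of b j "mate M k"] non_nbrs_sym[OF b_in_V j(1)] mates_ne_b by blast
  moreover have "{{j, mate M j}, {k, mate M k}, {l, mate M l}} \<subseteq> M"
    using k j l mate_in_M by simp
  moreover have "matching E {{mate M j, l}, {k, mate M l}}"
    using k j l mate_notin_non_nbrs[OF j(1)] mate_notin_non_nbrs[OF l(1)]
    by (intro matching_two_edges[OF jl kl]) auto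
  ultimately show False
    using exchange_not_missing_anticherry[of "{{j, mate M j}, {k, mate M k}, {l, mate M l}}"
        "{{mate M j, l}, {k, mate M l}}" j b "mate M k"]
      k j l mates_ne_b mate_notin_non_nbrs[OF k] mate_notin_non_nbrs[OF j(1)]
      mate_notin_non_nbrs[OF l(1)] b_in_V
    by auto
qed

lemma non_nbrs_if_mate_non_adj:
  assumes k: "k \<in> non_nbrs b" and j: "j \<in> non_nbrs b" "j \<noteq> k"
    and non_adj: "\<not> adj E (mate M k) j"
  shows "V - mates - {j, k} \<subseteq> non_nbrs k"
proof
  fix y assume y: "y \<in> V - mates - {j, k}"
  show "y \<in> non_nbrs k"
  proof (cases "y = b")
    case True
    then show ?thesis
      using non_nbrs_sym[OF b_in_V k] by simp
  next
    case False
    then show ?thesis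
      using y non_adj_if_mate_non_adj[OF k j non_adj, of y] by simp
  qed
qed

lemma card_V_if_mate_non_adj:
  assumes k: "k \<in> non_nbrs b" and j: "j \<in> non_nbrs b" "j \<noteq> k"
    and non_adj: "\<not> adj E (mate M k) j"
  shows "card (V - mates - {j, k}) = card V - card (non_nbrs b) - 2"
    and "card V = 2 * card (non_nbrs b) + 1"
proof -
  have "card (V - mates) = card V - card (non_nbrs b)"
    using mates_subset card_mates finite_V
    by (metis Diff_subset card_Diff_subset finite_subset subset_trans)
  moreover have "{j, k} \<subseteq> V - mates" "card {j, k} = 2"
    using k j mates_subset by auto
  ultimately show card_rest: "card (V - mates - {j, k}) = card V - card (non_nbrs b) - 2"
    using finite_V by (simp add: card_Diff_subset)
  have "card (V - mates - {j, k}) \<le> card (non_nbrs b)"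
    using card_mono[OF finite_non_nbrs non_nbrs_if_mate_non_adj[OF assms]] antidegree_max k
    by fastforce
  moreover have "odd (card V)"
    using odd_card_V b_in_V by blast
  ultimately show "card V = 2 * card (non_nbrs b) + 1"
    using card_rest card_V_ge_twice_antidegree by presburger
qed

lemma non_nbrs_eq_if_mate_non_adj:
  assumes k: "k \<in> non_nbrs b" and j: "j \<in> non_nbrs b" "j \<noteq> k"
    and non_adj: "\<not> adj E (mate M k) j"
  shows "non_nbrs k = insert (mate M j) (V - mates - {j, k})"
proof -
  have "mate M j \<in> non_nbrs k"
    using mate_non_adj_swap[OF assms] adj_commute[of E k] mate_notin_non_nbrs[OF j(1)] j k by auto
  then have "insert (mate M j) (V - mates - {j, k}) \<subseteq> non_nbrs k"
    using non_nbrs_if_mate_non_adj[OF assms] by blast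
  moreover have "card (non_nbrs b) > 0"
    using j finite_non_nbrs card_gt_0_iff by blast
  then have "card (insert (mate M j) (V - mates - {j, k})) = card (non_nbrs b)"
    using card_V_if_mate_non_adj[OF assms] j finite_V by simp
  ultimately show ?thesis
    using card_seteq[OF finite_non_nbrs] antidegree_max k by (metis mem_non_nbrs)
qed

lemma non_nbrs_mate_if_mate_non_adj:
  assumes k: "k \<in> non_nbrs b" and j: "j \<in> non_nbrs b" "j \<noteq> k"
    and non_adj: "\<not> adj E (mate M k) j"
  shows "(non_nbrs b - {j}) \<union> (mates - {mate M j}) \<subseteq> non_nbrs (mate M j)"
proof
  fix x assume x: "x \<in> (non_nbrs b - {j}) \<union> (mates - {mate M j})"
  have "x \<in> V" "x \<noteq> mate M j"
    using x mates_subset mate_notin_non_nbrs[OF j(1)] by auto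
  moreover have "\<not> adj E (mate M j) x"
  proof (cases "x \<in> mates")
    case True
    then have "x \<in> mates - {mate M j}"
      using x mates_subset by blast
    then obtain l where "l \<in> non_nbrs b" "x = mate M l" "l \<noteq> j"
      by blast
    then show ?thesis
      using mates_not_adj[OF j(1)] by blast
  next
    case False
    then have l: "x \<in> non_nbrs b" "x \<noteq> j"
      using x by auto
    show ?thesis
    proof (cases "x = k")
      case True
      then show ?thesis
        using mate_non_adj_swap[OF assms] by simp
    next
      case False
      have "mate M x \<notin> non_nbrs k"
        using non_nbrs_eq_if_mate_non_adj[OF assms] l j k by auto
      then have "adj E k (mate M x)"
        using l k mate_notin_non_nbrs[OF l(1)] by auto
      then show ?thesis
        using mate_non_adj_if_adj_mate[OF assms(1-3) l False non_adj] by simp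
    qed
  qed
  ultimately show "x \<in> non_nbrs (mate M j)"
    by simp
qed

lemma mate_adj_non_nbrs:
  assumes big: "7 \<le> card V" and k: "k \<in> non_nbrs b" and j: "j \<in> non_nbrs b"
  shows "adj E (mate M k) j"
proof (rule ccontr)
  assume non_adj: "\<not> adj E (mate M k) j"
  have jk: "j \<noteq> k"
    using non_adj adj_mate[of k] adj_commute[of E k] k by auto
  let ?X = "(non_nbrs b - {j}) \<union> (mates - {mate M j})"
  have "mate M j \<in> V"
    using j by simp
  then have "card ?X \<le> card (non_nbrs b)"
    using card_mono[OF finite_non_nbrs non_nbrs_mate_if_mate_non_adj[OF k j jk non_adj]]
      antidegree_max[of "mate M j"] by linarith
  moreover have "card ?X = 2 * (card (non_nbrs b) - 1)"
  proof -
    have "(non_nbrs b - {j}) \<inter> (mates - {mate M j}) = {}"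
      using mates_subset by blast
    moreover have "card (non_nbrs b - {j}) = card (non_nbrs b) - 1"
      "card (mates - {mate M j}) = card (non_nbrs b) - 1"
      using j card_mates finite_non_nbrs by auto
    ultimately show ?thesis
      using finite_non_nbrs by (simp add: card_Un_disjoint)
  qed
  ultimately show False
    using card_V_if_mate_non_adj(2)[OF k j jk non_adj] big by linarith
qed

lemma mate_adj_outside_if_nbr_in_non_nbrs:
  assumes k: "k \<in> non_nbrs b" and j: "j \<in> non_nbrs b" and kj: "adj E k j"
    and x: "x \<in> V - mates - non_nbrs b - {b}"
  shows "adj E (mate M k) x"
proof (rule ccontr)
  assume non_adj: "\<not> adj E (mate M k) x"
  have jk: "j \<noteq> k"
    using kj not_adj_self by blast
  have x': "mate M x \<notin> non_nbrs b" "mate M x \<notin> mates" "mate M x \<noteq> b"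
    using x mate_in_non_nbrs_iff[of x] mate_neq_b[of x] by auto
  have mates_ne_b: "mate M k \<noteq> b" "mate M j \<noteq> b"
    using k j mate_neq_b by simp_all
  have "anticherry E (mate M k) x (mate M j)"
    using k j x jk non_adj mates_not_adj[OF k j] by (auto simp: anticherry_def)
  moreover have "{{k, mate M k}, {j, mate M j}, {x, mate M x}} \<subseteq> M"
    using k j x mate_in_M by simp
  moreover have "matching E {{k, j}, {b, mate M x}}"
    using k j x x' jk by (intro matching_two_edges[OF kj]) auto
  ultimately show False
    using exchange_not_missing_anticherry[of "{{k, mate M k}, {j, mate M j}, {x, mate M x}}"
        "{{k, j}, {b, mate M x}}"
        "mate M k" x "mate M j"]
      k j x x' mates_ne_b mate_notin_non_nbrs[OF k] mate_notin_non_nbrs[OF j] b_in_V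
    by auto
qed

lemma mate_adj_outside_if_no_nbr_in_non_nbrs:
  assumes k: "k \<in> non_nbrs b" and no_nbr: "\<forall>j\<in>non_nbrs b. \<not> adj E k j"
    and a: "a1 \<in> non_nbrs b" "a2 \<in> non_nbrs b" "adj E a1 a2"
    and x: "x \<in> V - mates - non_nbrs b - {b}"
  shows "adj E (mate M k) x"
proof (rule ccontr)
  assume non_adj: "\<not> adj E (mate M k) x"
  have "a1 \<noteq> a2" "a1 \<noteq> k"
    using a no_nbr not_adj_self by blast+
  moreover have "a2 \<noteq> k"
    using a(1,3) no_nbr adj_commute[of E a1 a2] by metis
  ultimately have a_ne: "a1 \<noteq> a2" "a1 \<noteq> k" "a2 \<noteq> k" .
  have x': "mate M x \<notin> non_nbrs b" "mate M x \<notin> mates" "mate M x \<noteq> b"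
    using x mate_in_non_nbrs_iff[of x] mate_neq_b[of x] by auto
  have mates_ne_b: "mate M k \<noteq> b" "mate M a1 \<noteq> b" "mate M a2 \<noteq> b"
    using k a mate_neq_b by simp_all
  have "insert b (non_nbrs b - {k}) \<subseteq> non_nbrs k"
    using k no_nbr non_nbrs_sym[OF b_in_V k] by auto
  moreover have "card (non_nbrs b) > 0"
    using k finite_non_nbrs card_gt_0_iff by blast
  then have "card (insert b (non_nbrs b - {k})) = card (non_nbrs b)"
    using k finite_non_nbrs by simp
  ultimately have non_nbrs_k: "non_nbrs k = insert b (non_nbrs b - {k})"
    using card_seteq[OF finite_non_nbrs] antidegree_max k by (metis mem_non_nbrs)
  have adj_kx: "adj E k (mate M x)"
    using non_nbrs_k x x' k by auto
  have adj_b: "adj E b (mate M a2)"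
    using a mate_notin_non_nbrs[OF a(2)] mates_ne_b by auto
  have "matching E {{a1, a2}, {k, mate M x}, {b, mate M a2}}"
    using k a x x' a_ne mate_notin_non_nbrs[OF a(2)] mates_ne_b
    by (intro matching_three_edges[OF a(3) adj_kx adj_b]) auto
  moreover have "anticherry E (mate M k) x (mate M a1)"
    using k a x a_ne non_adj mates_not_adj[OF k a(1)] by (auto simp: anticherry_def)
  moreover have "{{k, mate M k}, {a1, mate M a1}, {x, mate M x}, {a2, mate M a2}} \<subseteq> M"
    using k a x mate_in_M by simp
  ultimately show False
    using exchange_not_missing_anticherry[of
        "{{k, mate M k}, {a1, mate M a1}, {x, mate M x}, {a2, mate M a2}}"
        "{{a1, a2}, {k, mate M x}, {b, mate M a2}}" "mate M k" x "mate M a1"]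
      k a x x' a_ne mates_ne_b mate_notin_non_nbrs[OF k] mate_notin_non_nbrs[OF a(1)]
      mate_notin_non_nbrs[OF a(2)] b_in_V
    by auto
qed

lemma joined_independent_set_mates:
  assumes big: "7 \<le> card V" and a: "a1 \<in> non_nbrs b" "a2 \<in> non_nbrs b" "adj E a1 a2"
  shows "joined_independent_set V E mates"
proof -
  have "adj E u v" if u: "u \<in> mates" and v: "v \<in> V - mates" for u v
  proof -
    obtain k where k: "k \<in> non_nbrs b" "u = mate M k"
      using u by blast
    consider "v = b" | "v \<in> non_nbrs b" | "v \<in> V - mates - non_nbrs b - {b}"
      using v by blast
    then show "adj E u v"
    proof cases
      case 1
      have "mate M k \<notin> non_nbrs b" "mate M k \<noteq> b"
        using mate_notin_non_nbrs[OF k(1)] mate_neq_b[of k] k by auto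
      then show ?thesis
        using 1 k adj_commute[of E b] by auto
    next
      case 2
      then show ?thesis
        using mate_adj_non_nbrs[OF big k(1)] k(2) by simp
    next
      case 3
      show ?thesis
      proof (cases "\<exists>j\<in>non_nbrs b. adj E k j")
        case True
        then show ?thesis
          using mate_adj_outside_if_nbr_in_non_nbrs[OF k(1) _ _ 3] k(2) by blast
      next
        case False
        then show ?thesis
          using mate_adj_outside_if_no_nbr_in_non_nbrs[OF k(1) _ a 3] k(2) by blast
      qed
    qed
  qed
  moreover have "2 \<le> card mates"
  proof -
    have sub: "{a1, a2} \<subseteq> non_nbrs b" and ne: "a1 \<noteq> a2"
      using a not_adj_self by auto
    have "card {a1, a2} \<le> card (non_nbrs b)"
      by (rule card_mono[OF finite_non_nbrs sub])
    then show ?thesis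
      using ne card_mates by simp
  qed
  ultimately show ?thesis
    using independent_mates unfolding joined_independent_set_def by blast
qed

end

theorem (in anticherry_unmatchable) joined_independent_set_exists:
  assumes big: "7 \<le> card V" and non_complete: "\<exists>u\<in>V. \<exists>v\<in>V. u \<noteq> v \<and> \<not> adj E u v"
  shows "\<exists>S. joined_independent_set V E S"
proof -
  let ?antidegree = "\<lambda>v. card (non_nbrs v)"
  obtain u v where u: "u \<in> V" "v \<in> non_nbrs u"
    using non_complete by auto
  have "Max (?antidegree ` V) \<in> ?antidegree ` V"
    using finite_V u(1) by (intro Max_in) auto
  then obtain b where b: "b \<in> V" "Max (?antidegree ` V) = ?antidegree b"
    by blast
  have antidegree_max: "?antidegree v \<le> ?antidegree b" if "v \<in> V" for v
    unfolding b(2)[symmetric] using finite_V that by (intro Max_ge) auto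
  show ?thesis
  proof (cases "\<forall>a1\<in>non_nbrs b. \<forall>a2\<in>non_nbrs b. \<not> adj E a1 a2")
    case True
    have "?antidegree u > 0"
      using u(2) finite_non_nbrs card_gt_0_iff by blast
    then have "non_nbrs b \<noteq> {}"
      using antidegree_max[OF u(1)] by auto
    then show ?thesis
      using joined_independent_set_if_non_nbrs_independent[OF b(1) antidegree_max _ True] by blast
  next
    case False
    then obtain a1 a2 where a: "a1 \<in> non_nbrs b" "a2 \<in> non_nbrs b" "adj E a1 a2"
      by blast
    obtain M where "matching E M" "\<Union>M = V - {b}"
      using b(1) by (rule near_perfect_matching)
    then interpret max_antidegree V E b M
      using b(1) antidegree_max by unfold_locales
    show ?thesis
      using joined_independent_set_mates[OF big a] by blast
  qed
qed

theorem lemma3p4: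
  fixes V :: "'a set" and E :: "'a set set"
  assumes "graph V E"
    and "factor_critical V E"
    and "card V \<ge> 7"
    and "edge_stable E"
    and "\<not> (complete_graph V E \<and> odd (card V))"
  shows "\<exists>S. independent_set V E S \<and> card S \<ge> 2 \<and>
           (\<forall>u\<in>S. \<forall>v\<in>V - S. adj E u v)"
proof -
  interpret fc_graph V E
    using assms(1,2) by unfold_locales
  interpret anticherry_unmatchable V E
    using edge_stable_anticherry_unmatchable[OF assms(4)] by unfold_locales
  have "odd (card V)"
    using odd_card_V assms(3) by fastforce
  then have "\<exists>u\<in>V. \<exists>v\<in>V. u \<noteq> v \<and> \<not> adj E u v"
    using complete_graph_if_adj assms(5) by blast
  then show ?thesis
    using joined_independent_set_exists[OF assms(3)] unfolding joined_independent_set_def by blast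
qed

end
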